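(* Let $X$ be a Tychonoff space and $\mathcal A\subset\mathcal P(X)$ a family satisfying (A1)–(A4). For each $A\in\mathcal A$ let $cA$ and $dA$ be Hausdorff compactifications of $A$ (with $A$ carrying the subspace topology), and write $c\mathcal A=(cA)_{A\in\mathcal A}$, $d\mathcal A=(dA)_{A\in\mathcal A}$. (i) For every space $\mathcal E=(E(A))_{A\in\mathcal A}$ as in the definition of amalgamation and every regular space $Z$, a map $f:\mathrm{Amg}(X,\mathcal E)\to Z$ is continuous iff $f|_X$ and all $f|_{E(A)}$, $A\in\mathcal A$, are continuous. (ii) $\mathrm{Amg}(X,c\mathcal A)$ is a (Hausdorff) compactification of $X$. (iii) If $cA\preceq dA$ for every $A\in\mathcal A$, then $\mathrm{Amg}(X,c\mathcal A)\preceq\mathrm{Amg}(X,d\mathcal A)$. (iv) For every compactification $cX$ of $X$, $\mathrm{Amg}(X,(\overline A^{cX})_{A\in\mathcal A})\succeq cX$. (v) In particular, $\beta X=\mathrm{Amg}(X,(\beta A)_{A\in\mathcal A})$.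
   Context: Conditions on $\mathcal A\subset\mathcal P(X)$: (A1) every $A\in\mathcal A$ is clopen in $X$; (A2) $A\cap A'$ is compact for distinct $A,A'\in\mathcal A$; (A3) $K:=X\setminus\bigcup\mathcal A$ is compact; (A4) for every collection $\mathcal U$ of open subsets of $X$ covering $K$ there is a finite $\mathcal A'\subset\mathcal A$ such that for each $A\in\mathcal A\setminus\mathcal A'$ some $U\in\mathcal U$ satisfies $U\cup\bigcup\mathcal A'\supset A$. Amalgamation: let $\mathcal E=(E(A))_{A\in\mathcal A}$ be topological spaces with $A$ a dense subspace of $E(A)$. The set $\mathrm{Amg}(X,\mathcal E)=X\cup\bigcup_{A}E(A)$ is formed so that $X\cap E(A)=A$ and $E(A)\cap E(A')=A\cap A'$ for $A\ne A'$. For $P\subset Q$ spaces and $G$ open in $P$, $W^Q_P(G)$ denotes the largest open $W\subset Q$ with $W\cap P=G$. For $U$ open in $X$, $V_U=U\cup\bigcup_{A\in\mathcal A}W^{E(A)}_A(U\cap A)$. The topology of $\mathrm{Amg}(X,\mathcal E)$ has as basis all open subsets of each $E(A)$ and all $V_U$, $U$ open in $X$. Compactification order: $cX\succeq dX$ if there is a continuous $f:cX\to dX$ with $f|_X=\mathrm{id}_X$. $\beta$ denotes Čech–Stone compactification. *)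

theory Defs
  imports "HOL-Analysis.Analysis"
begin

definition Tychonoff_space :: "'a topology \<Rightarrow> bool" where
  "Tychonoff_space X \<longleftrightarrow> completely_regular_space X \<and> Hausdorff_space X"

definition good_family :: "'a topology \<Rightarrow> 'a set set \<Rightarrow> bool" where
  "good_family X \<A> \<longleftrightarrow>
     (\<forall>A\<in>\<A>. A \<subseteq> topspace X) \<and>
     (\<forall>A\<in>\<A>. openin X A \<and> closedin X A) \<and>
     (\<forall>A\<in>\<A>. \<forall>A'\<in>\<A>. A \<noteq> A' \<longrightarrow> compactin X (A \<inter> A')) \<and>
     compactin X (topspace X - \<Union>\<A>) \<and>
     (\<forall>\<U>. (\<forall>U\<in>\<U>. openin X U) \<and> topspace X - \<Union>\<A> \<subseteq> \<Union>\<U> \<longrightarrow>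
        (\<exists>\<A>'. finite \<A>' \<and> \<A>' \<subseteq> \<A> \<and>
           (\<forall>A\<in>\<A> - \<A>'. \<exists>U\<in>\<U>. A \<subseteq> U \<union> \<Union>\<A>')))"

definition is_compactification :: "'a topology \<Rightarrow> 'b topology \<Rightarrow> ('a \<Rightarrow> 'b) \<Rightarrow> bool" where
  "is_compactification X C e \<longleftrightarrow>
     compact_space C \<and> Hausdorff_space C \<and> embedding_map X C e \<and>
     C closure_of (e ` topspace X) = topspace C"

definition compactification_le ::
  "'a topology \<Rightarrow> 'b topology \<Rightarrow> ('a \<Rightarrow> 'b) \<Rightarrow> 'c topology \<Rightarrow> ('a \<Rightarrow> 'c) \<Rightarrow> bool" where
  "compactification_le X C e D d \<longleftrightarrow>
     (\<exists>f. continuous_map D C f \<and> (\<forall>x\<in>topspace X. f (d x) = e x))"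

definition is_stone_cech :: "'a topology \<Rightarrow> 'b topology \<Rightarrow> ('a \<Rightarrow> 'b) \<Rightarrow> bool" where
  "is_stone_cech X C e \<longleftrightarrow> is_compactification X C e \<and>
     (\<forall>f. continuous_map X euclideanreal f \<and> bounded (f ` topspace X) \<longrightarrow>
        (\<exists>g. continuous_map C euclideanreal g \<and> (\<forall>x\<in>topspace X. g (e x) = f x)))"

definition amalg_data ::
  "'a topology \<Rightarrow> 'a set set \<Rightarrow> ('a set \<Rightarrow> 'b topology) \<Rightarrow> ('a set \<Rightarrow> 'a \<Rightarrow> 'b) \<Rightarrow> bool" where
  "amalg_data X \<A> E j \<longleftrightarrow>
     (\<forall>A\<in>\<A>. embedding_map (subtopology X A) (E A) (j A) \<and>
             (E A) closure_of (j A ` A) = topspace (E A))"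

text \<open>The amalgamated set is modelled on the type 'a + ('a set \<times> 'b): points of X are
  Inl x, points of E(A) \<setminus> A are Inr (A, e). amg_in j A maps E(A) into it, identifying
  j A a with Inl a.\<close>
definition amg_in :: "('a set \<Rightarrow> 'a \<Rightarrow> 'b) \<Rightarrow> 'a set \<Rightarrow> 'b \<Rightarrow> 'a + 'a set \<times> 'b" where
  "amg_in j A y = (if y \<in> j A ` A then Inl (inv_into A (j A) y) else Inr (A, y))"

definition Wext :: "'b topology \<Rightarrow> 'b set \<Rightarrow> 'b set \<Rightarrow> 'b set" where
  "Wext Q P G = \<Union>{W. openin Q W \<and> W \<inter> P = G}"

definition amg_V ::
  "'a set set \<Rightarrow> ('a set \<Rightarrow> 'b topology) \<Rightarrow> ('a set \<Rightarrow> 'a \<Rightarrow> 'b) \<Rightarrow> 'a set \<Rightarrow> ('a + 'a set \<times> 'b) set" where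
  "amg_V \<A> E j U = Inl ` U \<union> (\<Union>A\<in>\<A>. amg_in j A ` Wext (E A) (j A ` A) (j A ` (U \<inter> A)))"

definition Amg ::
  "'a topology \<Rightarrow> 'a set set \<Rightarrow> ('a set \<Rightarrow> 'b topology) \<Rightarrow> ('a set \<Rightarrow> 'a \<Rightarrow> 'b) \<Rightarrow> ('a + 'a set \<times> 'b) topology" where
  "Amg X \<A> E j = topology_generated_by
     ({amg_in j A ` V | A V. A \<in> \<A> \<and> openin (E A) V} \<union>
      {amg_V \<A> E j U | U. openin X U})"

end

theory Submission
  imports Defs
begin

text \<open>The sets V U are the largest open sets of the amalgamation whose trace on X is U; a point of
  E(A) outside A lies in V U only if it lies in the closure of the trace of U on A. For (i), given
  an open N around f(x), regularity of Z gives an open G around f(x) with closure inside N, and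
  U = (f \<circ> Inl)\<inverse>(G) satisfies f(V U) \<subseteq> N as soon as f maps such closure points of E(A) into
  closures of images; this holds if f is continuous on the amalgamation as well as if it is
  continuous on every E(A). For (ii), distinct members of \<A> meet in compact, hence closed, subsets
  of the E(A), which makes the inclusions of the E(A) continuous and separates points of different
  E(A); an open cover is reduced on the compact remainder K to finitely many V U, which by (A4)
  cover all but finitely many E(A), and those are compact. Parts (iii)--(v) glue maps defined on
  X and on the E(A) by (i).\<close>

lemma embedding_map_imp_continuous_map: "embedding_map X Y f \<Longrightarrow> continuous_map X Y f"
  unfolding embedding_map_def
  using homeomorphic_imp_continuous_map continuous_map_in_subtopology by blast

lemma regular_space_closure_of_nbhd:
  assumes "regular_space Z" "openin Z N" "z \<in> N"
  obtains G where "openin Z G" "z \<in> G" "Z closure_of G \<subseteq> N"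
proof -
  have "closedin Z (topspace Z - N)" using assms(2) by blast
  moreover have "z \<in> topspace Z - (topspace Z - N)" using assms(3) openin_subset[OF assms(2)] by blast
  ultimately obtain G where "openin Z G" "z \<in> G" "disjnt (topspace Z - N) (Z closure_of G)"
    using assms(1) unfolding regular_space by blast
  then show ?thesis
    using that closure_of_subset_topspace[of Z G] unfolding disjnt_def by blast
qed

lemma subset_Union_finite_reduction:
  assumes "T - \<Union>\<A> \<subseteq> \<Union>\<V>" "\<forall>A\<in>\<A> - \<F>. \<exists>U\<in>\<V>. A \<subseteq> U \<union> \<Union>\<F>"
  shows "T \<subseteq> \<Union>\<F> \<union> \<Union>\<V>"
proof
  fix x assume x: "x \<in> T"
  show "x \<in> \<Union>\<F> \<union> \<Union>\<V>"
  proof (cases "x \<in> \<Union>\<A>")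
    case True
    then obtain A where A: "A \<in> \<A>" "x \<in> A" by blast
    show ?thesis
    proof (cases "A \<in> \<F>")
      case False
      then obtain U where "U \<in> \<V>" "A \<subseteq> U \<union> \<Union>\<F>" using assms(2) A(1) by blast
      then show ?thesis using A(2) by blast
    qed (use A in blast)
  next
    case False
    then show ?thesis using assms(1) x by blast
  qed
qed

section \<open>Largest open extensions\<close>

lemma openin_Wext: "openin Q (Wext Q P G)"
  unfolding Wext_def by (rule openin_Union) blast

lemma Wext_maximal: "openin Q W \<Longrightarrow> W \<inter> P = G \<Longrightarrow> W \<subseteq> Wext Q P G"
  unfolding Wext_def by auto

lemma Wext_Int: "openin Q W \<Longrightarrow> W \<inter> P = G \<Longrightarrow> Wext Q P G \<inter> P = G"
  unfolding Wext_def by auto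

lemma Wext_Int_subset: "Wext Q P G \<inter> P \<subseteq> G"
  unfolding Wext_def by blast

lemma openin_dense_Int_subset_closedin:
  assumes "Q closure_of P = topspace Q" "openin Q H" "closedin Q C" "H \<inter> P \<subseteq> C"
  shows "H \<subseteq> C"
proof -
  have "H \<subseteq> H \<inter> Q closure_of P" using assms(1) openin_subset[OF assms(2)] by blast
  also have "\<dots> \<subseteq> Q closure_of (H \<inter> P)" by (rule openin_Int_closure_of_subset[OF assms(2)])
  also have "\<dots> \<subseteq> C" using assms(3,4) by (simp add: closure_of_minimal)
  finally show ?thesis .
qed

lemma Wext_subset_closure_of:
  assumes "Q closure_of P = topspace Q" "openin Q W" "W \<inter> P = G"
  shows "Wext Q P G \<subseteq> Q closure_of G"
proof -
  have "Wext Q P G \<subseteq> Wext Q P G \<inter> Q closure_of P"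
    using assms(1) openin_subset[OF openin_Wext, of Q P G] by blast
  also have "\<dots> \<subseteq> Q closure_of (Wext Q P G \<inter> P)" by (rule openin_Int_closure_of_subset[OF openin_Wext])
  finally show ?thesis using Wext_Int[OF assms(2,3)] by simp
qed

lemma Wext_disjoint:
  assumes "Q closure_of P = topspace Q" "G \<inter> G' = {}"
  shows "Wext Q P G \<inter> Wext Q P G' = {}"
proof -
  let ?H = "Wext Q P G \<inter> Wext Q P G'"
  have "?H \<inter> P = {}"
    using Wext_Int_subset[of Q P G] Wext_Int_subset[of Q P G'] assms(2) by blast
  then have "?H \<inter> Q closure_of P = {}"
    by (rule openin_Int_closure_of_eq_empty[THEN iffD2, OF openin_Int[OF openin_Wext openin_Wext]])
  moreover have "?H \<subseteq> topspace Q" using openin_subset[OF openin_Wext, of Q P G] by blast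
  ultimately show ?thesis using assms(1) by (simp add: Int_absorb2)
qed

section \<open>The amalgamated space\<close>

lemma amg_in_eq_Inl: "amg_in j A y = Inl x \<Longrightarrow> x \<in> A \<and> y = j A x"
  by (auto simp: amg_in_def inv_into_into f_inv_into_f split: if_splits)

lemma amg_in_eq_Inr: "amg_in j A y = Inr (B, z) \<Longrightarrow> B = A \<and> z = y \<and> y \<notin> j A ` A"
  by (auto simp: amg_in_def split: if_splits)

lemma amg_in_outside: "y \<notin> j A ` A \<Longrightarrow> amg_in j A y = Inr (A, y)"
  by (simp add: amg_in_def)

lemma amg_in_cases:
  obtains a where "a \<in> A" "y = j A a" "amg_in j A y = Inl a"
  | "y \<notin> j A ` A" "amg_in j A y = Inr (A, y)"
  by (cases "amg_in j A y") (auto dest: amg_in_eq_Inl amg_in_eq_Inr)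

lemma inj_amg_in: "inj (amg_in j A)"
proof (rule injI)
  fix y y' assume eq: "amg_in j A y = amg_in j A y'"
  show "y = y'"
  proof (cases "amg_in j A y")
    case (Inl a)
    then show ?thesis using eq amg_in_eq_Inl[of j A y a] amg_in_eq_Inl[of j A y' a] by simp
  next
    case (Inr b)
    obtain B z where "b = (B, z)" by fastforce
    then show ?thesis using Inr eq amg_in_eq_Inr[of j A y B z] amg_in_eq_Inr[of j A y' B z] by simp
  qed
qed

locale amalgamation =
  fixes X :: "'a topology" and \<A> :: "'a set set" and E :: "'a set \<Rightarrow> 'b topology"
    and j :: "'a set \<Rightarrow> 'a \<Rightarrow> 'b"
  assumes openin_member: "\<And>A. A \<in> \<A> \<Longrightarrow> openin X A"
    and amalg_data: "amalg_data X \<A> E j"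
begin

abbreviation "amg \<equiv> Amg X \<A> E j"
abbreviation "W A U \<equiv> Wext (E A) (j A ` A) (j A ` (U \<inter> A))"
abbreviation "V U \<equiv> amg_V \<A> E j U"
abbreviation "amg_subbasis \<equiv>
  {amg_in j A ` G | A G. A \<in> \<A> \<and> openin (E A) G} \<union> {amg_V \<A> E j U | U. openin X U}"

lemma amg_eq: "amg = topology_generated_by amg_subbasis"
  by (simp add: Amg_def)

lemma member_subset_topspace: "A \<in> \<A> \<Longrightarrow> A \<subseteq> topspace X"
  using openin_member openin_subset by blast

lemma topspace_subtopology_member: "A \<in> \<A> \<Longrightarrow> topspace (subtopology X A) = A"
  using member_subset_topspace by auto

lemma embedding_map_j: "A \<in> \<A> \<Longrightarrow> embedding_map (subtopology X A) (E A) (j A)"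
  using amalg_data unfolding amalg_data_def by blast

lemma dense_j: "A \<in> \<A> \<Longrightarrow> E A closure_of (j A ` A) = topspace (E A)"
  using amalg_data unfolding amalg_data_def by blast

lemma inj_on_j: "A \<in> \<A> \<Longrightarrow> inj_on (j A) A"
  using embedding_map_j topspace_subtopology_member
  by (metis embedding_map_def homeomorphic_map_def)

lemma continuous_map_j: "A \<in> \<A> \<Longrightarrow> continuous_map (subtopology X A) (E A) (j A)"
  by (rule embedding_map_imp_continuous_map[OF embedding_map_j])

lemma image_j_subset_topspace: "A \<in> \<A> \<Longrightarrow> j A ` A \<subseteq> topspace (E A)"
  using continuous_map_j topspace_subtopology_member
  by (metis continuous_map_image_subset_topspace)

lemma openin_image_j:
  assumes "A \<in> \<A>" "S \<subseteq> A" "openin (subtopology X A) S"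
  shows "openin (subtopology (E A) (j A ` A)) (j A ` S)"
  using homeomorphic_map_openness[of "subtopology X A" "subtopology (E A) (j A ` A)" "j A" S]
    embedding_map_j[of A] assms topspace_subtopology_member[of A] member_subset_topspace[of A]
  by (simp add: embedding_map_def)

lemma amg_in_j: "A \<in> \<A> \<Longrightarrow> a \<in> A \<Longrightarrow> amg_in j A (j A a) = Inl a"
  using inj_on_j by (simp add: amg_in_def)

lemma openin_member_subset:
  assumes "A \<in> \<A>" "openin (subtopology X A) S"
  shows "openin X S"
  using assms openin_open_subtopology[OF openin_member[OF assms(1)]] by blast

lemma exists_openin_trace:
  assumes "A \<in> \<A>" "openin X U"
  obtains G where "openin (E A) G" "G \<inter> j A ` A = j A ` (U \<inter> A)"
proof -
  have "openin (subtopology X A) (U \<inter> A)" using assms(2) by (rule openin_subtopology_Int)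
  then have "openin (subtopology (E A) (j A ` A)) (j A ` (U \<inter> A))" by (rule openin_image_j[OF assms(1) Int_lower2])
  then obtain G where "openin (E A) G" "j A ` (U \<inter> A) = G \<inter> j A ` A"
    unfolding openin_subtopology by blast
  then show ?thesis using that by simp
qed

lemma W_Int:
  assumes "A \<in> \<A>" "openin X U"
  shows "W A U \<inter> j A ` A = j A ` (U \<inter> A)"
proof -
  obtain G where "openin (E A) G" "G \<inter> j A ` A = j A ` (U \<inter> A)"
    using exists_openin_trace[OF assms] .
  then show ?thesis by (rule Wext_Int)
qed

lemma W_subset_closure_of:
  assumes "A \<in> \<A>" "openin X U"
  shows "W A U \<subseteq> E A closure_of (j A ` (U \<inter> A))"
proof -
  obtain G where "openin (E A) G" "G \<inter> j A ` A = j A ` (U \<inter> A)"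
    using exists_openin_trace[OF assms] .
  then show ?thesis by (rule Wext_subset_closure_of[OF dense_j[OF assms(1)]])
qed

lemma W_mono:
  assumes "A \<in> \<A>" "openin X U'" "U \<subseteq> U'"
  shows "W A U \<subseteq> W A U'"
proof -
  obtain G where G: "openin (E A) G" "G \<inter> j A ` A = j A ` (U' \<inter> A)"
    using exists_openin_trace[OF assms(1,2)] by blast
  have "W A U \<inter> j A ` A \<subseteq> j A ` (U \<inter> A)" by (rule Wext_Int_subset)
  also have "\<dots> \<subseteq> j A ` (U' \<inter> A)" using assms(3) by (intro image_mono Int_mono) auto
  finally have "(W A U \<union> G) \<inter> j A ` A = j A ` (U' \<inter> A)"
    using G(2) by (simp add: Int_Un_distrib2 Un_absorb1)
  then have "W A U \<union> G \<subseteq> W A U'" by (rule Wext_maximal[OF openin_Un[OF openin_Wext G(1)]])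
  then show ?thesis by (rule le_supE)
qed

lemma Inl_in_V_iff:
  assumes "openin X U"
  shows "Inl x \<in> V U \<longleftrightarrow> x \<in> U"
proof
  assume "Inl x \<in> V U"
  then consider "(Inl x :: 'a + 'a set \<times> 'b) \<in> Inl ` U" | A w where "A \<in> \<A>" "w \<in> W A U" "Inl x = amg_in j A w"
    unfolding amg_V_def by blast
  then show "x \<in> U"
  proof cases
    case 1
    then show ?thesis by auto
  next
    case (2 A w)
    have "x \<in> A" "w = j A x" using amg_in_eq_Inl[OF 2(3)[symmetric]] by auto
    then have "j A x \<in> j A ` (U \<inter> A)" using W_Int[OF 2(1) assms] 2(2) by blast
    then show ?thesis using inj_on_j[OF 2(1)] \<open>x \<in> A\<close> by (auto dest: inj_onD)
  qed
next
  assume "x \<in> U"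
  then show "Inl x \<in> V U" unfolding amg_V_def by blast
qed

lemma Inr_in_V:
  assumes "Inr (B, w) \<in> V U"
  shows "B \<in> \<A> \<and> w \<in> W B U \<and> w \<notin> j B ` B"
proof -
  have "Inr (B, w) \<notin> Inl ` U" by blast
  then obtain A y where "A \<in> \<A>" "y \<in> W A U" "Inr (B, w) = amg_in j A y"
    using assms unfolding amg_V_def by blast
  then show ?thesis using amg_in_eq_Inr[of j A y B w] by simp
qed

lemma amg_in_image_W_subset_V: "A \<in> \<A> \<Longrightarrow> amg_in j A ` W A U \<subseteq> V U"
  unfolding amg_V_def by blast

lemma V_mono: "openin X U' \<Longrightarrow> U \<subseteq> U' \<Longrightarrow> V U \<subseteq> V U'"
  unfolding amg_V_def by (intro Un_mono image_mono UN_mono order_refl W_mono)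

lemma W_subset_topspace: "W A U \<subseteq> topspace (E A)"
  by (rule openin_subset[OF openin_Wext])

lemma topspace_amg: "topspace amg = Inl ` topspace X \<union> (\<Union>A\<in>\<A>. amg_in j A ` topspace (E A))"
  (is "_ = ?R")
proof -
  have image_subset: "amg_in j A ` Y \<subseteq> ?R" if "A \<in> \<A>" "Y \<subseteq> topspace (E A)" for A Y
  proof -
    have "amg_in j A ` Y \<subseteq> amg_in j A ` topspace (E A)" using that(2) by (rule image_mono)
    also have "\<dots> \<subseteq> (\<Union>A\<in>\<A>. amg_in j A ` topspace (E A))" using that(1) by (rule UN_upper)
    finally show ?thesis by (rule subset_trans) (rule Un_upper2)
  qed
  have "S \<subseteq> ?R" if "S \<in> amg_subbasis" for S
    using that
  proof
    assume "S \<in> {amg_in j A ` G | A G. A \<in> \<A> \<and> openin (E A) G}"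
    then obtain A G where S: "S = amg_in j A ` G" "A \<in> \<A>" "openin (E A) G" by blast
    show ?thesis unfolding S(1) by (rule image_subset[OF S(2) openin_subset[OF S(3)]])
  next
    assume "S \<in> {amg_V \<A> E j U | U. openin X U}"
    then obtain U where U: "openin X U" "S = V U" by blast
    have "Inl ` U \<subseteq> ?R" using openin_subset[OF U(1)] by blast
    moreover have "(\<Union>A\<in>\<A>. amg_in j A ` W A U) \<subseteq> ?R"
      by (rule UN_least) (rule image_subset[OF _ W_subset_topspace])
    ultimately show ?thesis unfolding U(2) amg_V_def by (rule Un_least)
  qed
  then have "\<Union>amg_subbasis \<subseteq> ?R" by (rule Union_least)
  moreover have "Inl ` topspace X \<subseteq> \<Union>amg_subbasis"
  proof -
    have "V (topspace X) \<in> amg_subbasis" by blast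
    moreover have "Inl ` topspace X \<subseteq> V (topspace X)" unfolding amg_V_def by (rule Un_upper1)
    ultimately show ?thesis by blast
  qed
  moreover have "(\<Union>A\<in>\<A>. amg_in j A ` topspace (E A)) \<subseteq> \<Union>amg_subbasis"
  proof (rule UN_least)
    fix A assume "A \<in> \<A>"
    then have "amg_in j A ` topspace (E A) \<in> amg_subbasis" by blast
    then show "amg_in j A ` topspace (E A) \<subseteq> \<Union>amg_subbasis" by (rule Union_upper)
  qed
  ultimately have "\<Union>amg_subbasis = ?R" by (intro equalityI Un_least)
  then show ?thesis unfolding amg_eq topology_generated_by_topspace .
qed

lemma amg_points_cases:
  assumes "p \<in> topspace amg"
  obtains x where "x \<in> topspace X" "p = Inl x"
  | A y where "A \<in> \<A>" "y \<in> topspace (E A)" "y \<notin> j A ` A" "p = Inr (A, y)"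
proof (cases "p \<in> Inl ` topspace X")
  case True
  then obtain x where "x \<in> topspace X" "p = Inl x" by blast
  then show ?thesis by (rule that(1))
next
  case False
  with assms have "p \<in> (\<Union>A\<in>\<A>. amg_in j A ` topspace (E A))"
    unfolding topspace_amg by blast
  then obtain A y where A: "A \<in> \<A>" "y \<in> topspace (E A)" "p = amg_in j A y" by blast
  show ?thesis
  proof (cases rule: amg_in_cases[of A y j])
    case (1 a)
    have "a \<in> topspace X" using 1(1) member_subset_topspace[OF A(1)] by blast
    moreover have "p = Inl a" using A(3) 1(3) by simp
    ultimately show ?thesis by (rule that(1))
  next
    case 2
    then show ?thesis using that(2)[OF A(1,2)] A(3) by simp
  qed
qed

lemma Inl_in_topspace_amg: "x \<in> topspace X \<Longrightarrow> Inl x \<in> topspace amg"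
  unfolding topspace_amg by blast

lemma amg_in_in_topspace_amg: "A \<in> \<A> \<Longrightarrow> y \<in> topspace (E A) \<Longrightarrow> amg_in j A y \<in> topspace amg"
  unfolding topspace_amg by blast

lemma openin_amg_image: "A \<in> \<A> \<Longrightarrow> openin (E A) G \<Longrightarrow> openin amg (amg_in j A ` G)"
  unfolding amg_eq by (rule topology_generated_by_Basis) blast

lemma openin_amg_V: "openin X U \<Longrightarrow> openin amg (V U)"
  unfolding amg_eq by (rule topology_generated_by_Basis) blast

lemma amg_nbhd_Inr:
  assumes "openin amg N" "A \<in> \<A>" "Inr (A, y) \<in> N"
  obtains G where "openin (E A) G" "y \<in> G" "amg_in j A ` G \<subseteq> N"
proof -
  have "generate_topology_on amg_subbasis N"
    using assms(1) unfolding amg_eq by (rule openin_topology_generated_by)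
  then have "\<exists>G. openin (E A) G \<and> y \<in> G \<and> amg_in j A ` G \<subseteq> N"
    using assms(3)
  proof induction
    case (Int N1 N2)
    then obtain G1 G2 where "openin (E A) G1" "y \<in> G1" "amg_in j A ` G1 \<subseteq> N1"
      "openin (E A) G2" "y \<in> G2" "amg_in j A ` G2 \<subseteq> N2" by auto
    then show ?case by (intro exI[of _ "G1 \<inter> G2"]) auto
  next
    case (UN K)
    then obtain N' where "N' \<in> K" "Inr (A, y) \<in> N'" by auto
    with UN obtain G where "openin (E A) G \<and> y \<in> G \<and> amg_in j A ` G \<subseteq> N'" by blast
    then show ?case using \<open>N' \<in> K\<close> by blast
  next
    case (Basis S)
    from Basis(1) show ?case
    proof
      assume "S \<in> {amg_in j A ` G | A G. A \<in> \<A> \<and> openin (E A) G}"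
      then obtain A' G where S: "S = amg_in j A' ` G" "openin (E A') G" by blast
      then obtain v where "v \<in> G" "amg_in j A' v = Inr (A, y)" using Basis(2) by auto
      then have "A' = A" "v = y" using amg_in_eq_Inr[of j A' v A y] by simp_all
      then show ?thesis using S \<open>v \<in> G\<close> by blast
    next
      assume "S \<in> {amg_V \<A> E j U | U. openin X U}"
      then obtain U where S: "S = V U" by blast
      have "y \<in> W A U" using Inr_in_V[of A y U] Basis(2) S by simp
      moreover have "amg_in j A ` W A U \<subseteq> S" using S amg_in_image_W_subset_V[OF assms(2)] by simp
      ultimately show ?thesis by (intro exI[of _ "W A U"] conjI openin_Wext)
    qed
  qed simp
  then show ?thesis using that by blast
qed

lemma amg_nbhd_Inl:
  assumes "openin amg N" "x \<notin> \<Union>\<A>" "Inl x \<in> N"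
  obtains U where "openin X U" "x \<in> U" "V U \<subseteq> N"
proof -
  have "generate_topology_on amg_subbasis N"
    using assms(1) unfolding amg_eq by (rule openin_topology_generated_by)
  then have "\<exists>U. openin X U \<and> x \<in> U \<and> V U \<subseteq> N"
    using assms(3)
  proof induction
    case (Int N1 N2)
    then obtain U1 U2 where U: "openin X U1" "x \<in> U1" "V U1 \<subseteq> N1"
      "openin X U2" "x \<in> U2" "V U2 \<subseteq> N2" by auto
    moreover have "V (U1 \<inter> U2) \<subseteq> V U1" by (rule V_mono[OF U(1)]) blast
    moreover have "V (U1 \<inter> U2) \<subseteq> V U2" by (rule V_mono[OF U(4)]) blast
    ultimately show ?case by (intro exI[of _ "U1 \<inter> U2"]) auto
  next
    case (UN K)
    then obtain N' where "N' \<in> K" "Inl x \<in> N'" by auto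
    with UN obtain U where "openin X U \<and> x \<in> U \<and> V U \<subseteq> N'" by blast
    then show ?case using \<open>N' \<in> K\<close> by blast
  next
    case (Basis S)
    from Basis(1) show ?case
    proof
      assume "S \<in> {amg_in j A ` G | A G. A \<in> \<A> \<and> openin (E A) G}"
      then obtain A G where S: "S = amg_in j A ` G" "A \<in> \<A>" by blast
      then obtain v where "amg_in j A v = Inl x" using Basis(2) by auto
      then show ?thesis using amg_in_eq_Inl[of j A v x] S(2) assms(2) by blast
    next
      assume "S \<in> {amg_V \<A> E j U | U. openin X U}"
      then obtain U where S: "S = V U" "openin X U" by blast
      then show ?thesis using Inl_in_V_iff[OF S(2)] Basis(2) by blast
    qed
  qed simp
  then show ?thesis using that by blast
qed

lemma continuous_map_Inl: "continuous_map X amg Inl"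
  unfolding amg_eq
proof (rule continuous_on_generated_topo)
  fix S assume "S \<in> amg_subbasis"
  then show "openin X (Inl -` S \<inter> topspace X)"
  proof
    assume "S \<in> {amg_in j A ` G | A G. A \<in> \<A> \<and> openin (E A) G}"
    then obtain A G where S: "S = amg_in j A ` G" "A \<in> \<A>" "openin (E A) G" by blast
    have "Inl -` S \<inter> topspace X = {x \<in> topspace (subtopology X A). j A x \<in> G}"
    proof (intro equalityI subsetI)
      fix x assume "x \<in> Inl -` S \<inter> topspace X"
      then obtain v where "v \<in> G" "amg_in j A v = Inl x" using S(1) by auto
      then show "x \<in> {x \<in> topspace (subtopology X A). j A x \<in> G}"
        using amg_in_eq_Inl[of j A v x] topspace_subtopology_member[OF S(2)] by auto
    next
      fix x assume "x \<in> {x \<in> topspace (subtopology X A). j A x \<in> G}"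
      then have x: "x \<in> A" "j A x \<in> G" using topspace_subtopology_member[OF S(2)] by simp_all
      then have "Inl x \<in> S" using S(1) amg_in_j[OF S(2) x(1)] by (metis image_eqI)
      then show "x \<in> Inl -` S \<inter> topspace X" using x(1) member_subset_topspace[OF S(2)] by auto
    qed
    moreover have "openin (subtopology X A) {x \<in> topspace (subtopology X A). j A x \<in> G}"
      by (rule openin_continuous_map_preimage[OF continuous_map_j[OF S(2)] S(3)])
    ultimately show ?thesis using openin_member_subset[OF S(2)] by simp
  next
    assume "S \<in> {amg_V \<A> E j U | U. openin X U}"
    then obtain U where S: "S = V U" "openin X U" by blast
    then have "Inl -` S \<inter> topspace X = U"
      using Inl_in_V_iff[OF S(2)] openin_subset[OF S(2)] by blast
    then show ?thesis using S(2) by simp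
  qed
next
  have "V (topspace X) \<in> amg_subbasis" by blast
  moreover have "Inl ` topspace X \<subseteq> V (topspace X)" unfolding amg_V_def by (rule Un_upper1)
  ultimately show "Inl ` topspace X \<subseteq> \<Union>amg_subbasis" by blast
qed

lemma embedding_map_Inl: "embedding_map X amg Inl"
  unfolding embedding_map_def
proof (rule bijective_open_imp_homeomorphic_map)
  show "continuous_map X (subtopology amg (Inl ` topspace X)) Inl"
    using continuous_map_Inl by (simp add: continuous_map_in_subtopology)
  show "open_map X (subtopology amg (Inl ` topspace X)) Inl"
    unfolding open_map_def
  proof (intro allI impI)
    fix U assume U: "openin X U"
    have "Inl ` U = V U \<inter> Inl ` topspace X"
      using Inl_in_V_iff[OF U] openin_subset[OF U] by blast
    then show "openin (subtopology amg (Inl ` topspace X)) (Inl ` U)"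
      using openin_subtopology_Int[OF openin_amg_V[OF U]] by simp
  qed
  show "Inl ` topspace X = topspace (subtopology amg (Inl ` topspace X))"
    using Inl_in_topspace_amg by auto
qed simp

section \<open>Continuity\<close>

text \<open>The hypothesis on closures is what continuity of f, either on the amalgamation or on each
  E(A), provides at the points of E(A) outside A.\<close>
lemma V_nbhd_mapsto_open:
  assumes Z: "regular_space Z" and fX: "continuous_map X Z (\<lambda>x. f (Inl x))"
    and closure: "\<And>A S w. \<lbrakk>A \<in> \<A>; S \<subseteq> A; w \<in> E A closure_of (j A ` S); w \<notin> j A ` A\<rbrakk>
                    \<Longrightarrow> f (Inr (A, w)) \<in> Z closure_of ((\<lambda>x. f (Inl x)) ` S)"
    and N: "openin Z N" and x: "x \<in> topspace X" "f (Inl x) \<in> N"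
  obtains U where "openin X U" "x \<in> U" "f ` V U \<subseteq> N"
proof -
  obtain G where G: "openin Z G" "f (Inl x) \<in> G" "Z closure_of G \<subseteq> N"
    using regular_space_closure_of_nbhd[OF Z N x(2)] .
  have GN: "G \<subseteq> N" using closure_of_subset[OF openin_subset[OF G(1)]] G(3) by blast
  define U where "U = {x \<in> topspace X. f (Inl x) \<in> G}"
  have U: "openin X U" unfolding U_def by (rule openin_continuous_map_preimage[OF fX G(1)])
  have "f q \<in> N" if q: "q \<in> V U" for q
  proof (cases q)
    case (Inl z)
    then have "z \<in> U" using q Inl_in_V_iff[OF U] by simp
    then show ?thesis using Inl GN unfolding U_def by auto
  next
    case (Inr r)
    obtain B w where r: "r = (B, w)" by fastforce
    then have B: "B \<in> \<A>" "w \<in> W B U" "w \<notin> j B ` B" using q Inr Inr_in_V by auto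
    have "w \<in> E B closure_of (j B ` (U \<inter> B))" using W_subset_closure_of[OF B(1) U] B(2) by blast
    then have "f q \<in> Z closure_of ((\<lambda>x. f (Inl x)) ` (U \<inter> B))"
      using closure[OF B(1) Int_lower2 _ B(3)] Inr r by simp
    also have "\<dots> \<subseteq> Z closure_of G" by (rule closure_of_mono) (auto simp: U_def)
    finally show ?thesis using G(3) by blast
  qed
  moreover have "x \<in> U" unfolding U_def using x G(2) by blast
  ultimately show ?thesis using that U by blast
qed

lemma continuous_map_amg_Inr_in_closure_of:
  assumes f: "continuous_map amg Z f"
    and A: "A \<in> \<A>" and S: "S \<subseteq> A" and w: "w \<in> E A closure_of (j A ` S)" "w \<notin> j A ` A"
  shows "f (Inr (A, w)) \<in> Z closure_of ((\<lambda>x. f (Inl x)) ` S)"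
  unfolding in_closure_of
proof (intro conjI allI impI)
  have "w \<in> topspace (E A)" using w(1) closure_of_subset_topspace[of "E A" "j A ` S"] by blast
  then have w_top: "Inr (A, w) \<in> topspace amg"
    using amg_in_in_topspace_amg[OF A] amg_in_outside[of w j A, OF w(2)] by metis
  then show "f (Inr (A, w)) \<in> topspace Z" using continuous_map_image_subset_topspace[OF f] by blast
  fix T assume T: "f (Inr (A, w)) \<in> T \<and> openin Z T"
  have "openin amg {p \<in> topspace amg. f p \<in> T}"
    using openin_continuous_map_preimage[OF f] T by blast
  moreover have "Inr (A, w) \<in> {p \<in> topspace amg. f p \<in> T}" using w_top T by blast
  ultimately obtain G where G: "openin (E A) G" "w \<in> G" "amg_in j A ` G \<subseteq> {p \<in> topspace amg. f p \<in> T}"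
    using amg_nbhd_Inr[OF _ A] by blast
  then obtain a where a: "a \<in> S" "j A a \<in> G" using w(1) unfolding in_closure_of by blast
  then have "f (Inl a) \<in> T" using G(3) amg_in_j[OF A, of a] S by force
  then show "\<exists>y. y \<in> (\<lambda>x. f (Inl x)) ` S \<and> y \<in> T" using a(1) by blast
qed

lemma continuous_components_Inr_in_closure_of:
  assumes fA: "\<And>A. A \<in> \<A> \<Longrightarrow> continuous_map (E A) Z (\<lambda>y. f (amg_in j A y))"
    and A: "A \<in> \<A>" and S: "S \<subseteq> A" and w: "w \<in> E A closure_of (j A ` S)" "w \<notin> j A ` A"
  shows "f (Inr (A, w)) \<in> Z closure_of ((\<lambda>x. f (Inl x)) ` S)"
proof -
  have "f (amg_in j A w) \<in> Z closure_of ((\<lambda>y. f (amg_in j A y)) ` j A ` S)"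
    using continuous_map_image_closure_subset[OF fA[OF A]] w(1) by blast
  moreover have "(\<lambda>y. f (amg_in j A y)) ` j A ` S = (\<lambda>x. f (Inl x)) ` S"
    unfolding image_image using amg_in_j[OF A] S by (intro image_cong) auto
  ultimately show ?thesis using amg_in_outside[of w j A, OF w(2)] by simp
qed

lemma continuous_map_amg_component:
  assumes Z: "regular_space Z" and f: "continuous_map amg Z f" and A: "A \<in> \<A>"
  shows "continuous_map (E A) Z (\<lambda>y. f (amg_in j A y))"
  unfolding continuous_map
proof (intro conjI allI impI)
  show "(\<lambda>y. f (amg_in j A y)) ` topspace (E A) \<subseteq> topspace Z"
    using continuous_map_image_subset_topspace[OF f] amg_in_in_topspace_amg[OF A] by blast
  have fX: "continuous_map X Z (\<lambda>x. f (Inl x))"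
    using continuous_map_compose[OF continuous_map_Inl f] by (simp add: o_def)
  fix N assume N: "openin Z N"
  let ?P = "{y \<in> topspace (E A). f (amg_in j A y) \<in> N}"
  show "openin (E A) ?P"
    unfolding openin_subopen[of _ ?P]
  proof
    fix y assume y: "y \<in> ?P"
    show "\<exists>G. openin (E A) G \<and> y \<in> G \<and> G \<subseteq> ?P"
    proof (cases rule: amg_in_cases[of A y j])
      case (1 a)
      have "a \<in> topspace X" using 1(1) member_subset_topspace[OF A] by blast
      moreover have "f (Inl a) \<in> N" using y 1(3) by simp
      ultimately obtain U where U: "openin X U" "a \<in> U" "f ` V U \<subseteq> N"
        using V_nbhd_mapsto_open[OF Z fX continuous_map_amg_Inr_in_closure_of[OF f] N] by blast
      have "y \<in> W A U" using W_Int[OF A U(1)] 1(1,2) U(2) by blast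
      moreover have "W A U \<subseteq> ?P"
        using W_subset_topspace amg_in_image_W_subset_V[OF A, of U] U(3) by blast
      ultimately show ?thesis by (intro exI[of _ "W A U"] conjI openin_Wext)
    next
      case 2
      have "openin amg {p \<in> topspace amg. f p \<in> N}"
        by (rule openin_continuous_map_preimage[OF f N])
      moreover have "Inr (A, y) \<in> {p \<in> topspace amg. f p \<in> N}"
        using y 2(2) amg_in_in_topspace_amg[OF A] by force
      ultimately obtain G where G: "openin (E A) G" "y \<in> G"
        "amg_in j A ` G \<subseteq> {p \<in> topspace amg. f p \<in> N}"
        using amg_nbhd_Inr[OF _ A] by blast
      then have "G \<subseteq> ?P" using openin_subset[OF G(1)] by blast
      then show ?thesis using G(1,2) by blast
    qed
  qed
qed

lemma continuous_map_amg_from_components: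
  assumes Z: "regular_space Z" and fX: "continuous_map X Z (\<lambda>x. f (Inl x))"
    and fA: "\<And>A. A \<in> \<A> \<Longrightarrow> continuous_map (E A) Z (\<lambda>y. f (amg_in j A y))"
  shows "continuous_map amg Z f"
  unfolding continuous_map
proof (intro conjI allI impI)
  have "(\<lambda>x. f (Inl x)) ` topspace X \<subseteq> topspace Z"
    by (rule continuous_map_image_subset_topspace[OF fX])
  moreover have "(\<lambda>y. f (amg_in j A y)) ` topspace (E A) \<subseteq> topspace Z" if "A \<in> \<A>" for A
    by (rule continuous_map_image_subset_topspace[OF fA[OF that]])
  ultimately show "f ` topspace amg \<subseteq> topspace Z"
    unfolding topspace_amg image_Un image_UN image_image by blast
  fix N assume N: "openin Z N"
  let ?P = "{p \<in> topspace amg. f p \<in> N}"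
  show "openin amg ?P"
    unfolding openin_subopen[of _ ?P]
  proof
    fix p assume p: "p \<in> ?P"
    then have "p \<in> topspace amg" by blast
    then show "\<exists>T. openin amg T \<and> p \<in> T \<and> T \<subseteq> ?P"
    proof (cases rule: amg_points_cases)
      case (1 x)
      then obtain U where U: "openin X U" "x \<in> U" "f ` V U \<subseteq> N"
        using V_nbhd_mapsto_open[OF Z fX continuous_components_Inr_in_closure_of[OF fA] N] p
        by blast
      then have "V U \<subseteq> ?P" using openin_subset[OF openin_amg_V[OF U(1)]] by blast
      moreover have "p \<in> V U" using 1(2) Inl_in_V_iff[OF U(1)] U(2) by simp
      ultimately show ?thesis using openin_amg_V[OF U(1)] by blast
    next
      case (2 A y)
      let ?G = "{y \<in> topspace (E A). f (amg_in j A y) \<in> N}"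
      have "openin (E A) ?G" by (rule openin_continuous_map_preimage[OF fA[OF 2(1)] N])
      moreover have "p \<in> amg_in j A ` ?G" using p 2 amg_in_outside[of y j A, OF 2(3)] by force
      moreover have "amg_in j A ` ?G \<subseteq> ?P" using amg_in_in_topspace_amg[OF 2(1)] by blast
      ultimately show ?thesis using openin_amg_image[OF 2(1)] by blast
    qed
  qed
qed

lemma continuous_map_amg_iff:
  assumes "regular_space Z"
  shows "continuous_map amg Z f \<longleftrightarrow>
           continuous_map X Z (\<lambda>x. f (Inl x)) \<and>
           (\<forall>A\<in>\<A>. continuous_map (E A) Z (\<lambda>y. f (amg_in j A y)))"
  using continuous_map_amg_component[OF assms] continuous_map_amg_from_components[OF assms]
    continuous_map_compose[OF continuous_map_Inl, of Z f]
  by (auto simp: o_def)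

lemma continuous_map_amg_case_sum:
  assumes Z: "regular_space Z" and g: "continuous_map X Z g"
    and h: "\<And>A. A \<in> \<A> \<Longrightarrow> continuous_map (E A) Z (h A)"
    and agree: "\<And>A a. A \<in> \<A> \<Longrightarrow> a \<in> A \<Longrightarrow> h A (j A a) = g a"
  shows "continuous_map amg Z (case_sum g (case_prod h))"
proof (rule continuous_map_amg_from_components[OF Z])
  show "continuous_map X Z (\<lambda>x. case_sum g (case_prod h) (Inl x))" using g by simp
  fix A assume A: "A \<in> \<A>"
  show "continuous_map (E A) Z (\<lambda>y. case_sum g (case_prod h) (amg_in j A y))"
  proof (rule continuous_map_eq[OF h[OF A]])
    fix y
    show "h A y = case_sum g (case_prod h) (amg_in j A y)"
      by (cases rule: amg_in_cases[of A y j]) (simp_all add: agree[OF A])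
  qed
qed

section \<open>Hausdorffness and compactness\<close>

lemma amg_in_preimage_V:
  assumes A: "A \<in> \<A>" and U: "openin X U"
  shows "amg_in j A -` V U \<inter> topspace (E A) = W A U"
proof (intro equalityI subsetI)
  fix y assume y: "y \<in> amg_in j A -` V U \<inter> topspace (E A)"
  show "y \<in> W A U"
  proof (cases rule: amg_in_cases[of A y j])
    case (1 a)
    then have "y \<in> j A ` (U \<inter> A)" using y Inl_in_V_iff[OF U, of a] by simp
    then show ?thesis using W_Int[OF A U] by blast
  next
    case 2
    then show ?thesis using y Inr_in_V[of A y U] by simp
  qed
next
  fix y assume "y \<in> W A U"
  then show "y \<in> amg_in j A -` V U \<inter> topspace (E A)"
    using amg_in_image_W_subset_V[OF A, of U] W_subset_topspace by blast
qed

lemma amg_in_preimage_image_other: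
  assumes A: "A \<in> \<A>" and B: "B \<in> \<A>" and AB: "A \<noteq> B"
  shows "amg_in j A -` amg_in j B ` G \<inter> topspace (E A) = j A ` {a \<in> A \<inter> B. j B a \<in> G}"
proof (intro equalityI subsetI)
  fix y assume y: "y \<in> amg_in j A -` amg_in j B ` G \<inter> topspace (E A)"
  then obtain v where v: "v \<in> G" "amg_in j A y = amg_in j B v" by auto
  show "y \<in> j A ` {a \<in> A \<inter> B. j B a \<in> G}"
  proof (cases rule: amg_in_cases[of A y j])
    case (1 a)
    then have "a \<in> B" "v = j B a" using v(2) amg_in_eq_Inl[of j B v a] by simp_all
    then show ?thesis using 1(1,2) v(1) by blast
  next
    case 2
    then show ?thesis using v(2) amg_in_eq_Inr[of j B v A y] AB by simp
  qed
next
  fix y assume "y \<in> j A ` {a \<in> A \<inter> B. j B a \<in> G}"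
  then obtain a where a: "a \<in> A" "a \<in> B" "j B a \<in> G" "y = j A a" by blast
  then have "amg_in j A y = amg_in j B (j B a)" using amg_in_j[OF A a(1)] amg_in_j[OF B a(2)] by simp
  moreover have "y \<in> topspace (E A)" using image_j_subset_topspace[OF A] a(1,4) by blast
  ultimately show "y \<in> amg_in j A -` amg_in j B ` G \<inter> topspace (E A)" using a(3) by simp
qed

end

locale Hausdorff_amalgamation = amalgamation +
  assumes Hausdorff_member: "\<And>A. A \<in> \<A> \<Longrightarrow> Hausdorff_space (E A)"
    and compactin_Int_members: "\<And>A A'. \<lbrakk>A \<in> \<A>; A' \<in> \<A>; A \<noteq> A'\<rbrakk> \<Longrightarrow> compactin X (A \<inter> A')"
begin

lemma closedin_image_Int:
  assumes "A \<in> \<A>" "A' \<in> \<A>" "A \<noteq> A'"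
  shows "closedin (E A) (j A ` (A \<inter> A'))"
proof -
  have "compactin (subtopology X A) (A \<inter> A')"
    using compactin_Int_members[OF assms] by (simp add: compactin_subtopology)
  then have "compactin (E A) (j A ` (A \<inter> A'))"
    by (rule image_compactin[OF _ continuous_map_j[OF assms(1)]])
  then show ?thesis by (rule compactin_imp_closedin[OF Hausdorff_member[OF assms(1)]])
qed

text \<open>For B \<noteq> A the preimage is the trace on A of an open set of X; it is open in E(A) because
  it is open in the dense subspace A and contained in the closed set A \<inter> B.\<close>
lemma openin_amg_in_preimage_image:
  assumes A: "A \<in> \<A>" and B: "B \<in> \<A>" and G: "openin (E B) G"
  shows "openin (E A) (amg_in j A -` amg_in j B ` G \<inter> topspace (E A))"
proof (cases "B = A")
  case True
  then have "amg_in j A -` amg_in j B ` G = G" using inj_amg_in[of j A] by (simp add: inj_vimage_image_eq)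
  then show ?thesis using G True openin_subset[OF G] by (simp add: Int_absorb2)
next
  case False
  define S where "S = {a \<in> A \<inter> B. j B a \<in> G}"
  have SA: "S \<subseteq> A" unfolding S_def by blast
  have preimage: "amg_in j A -` amg_in j B ` G \<inter> topspace (E A) = j A ` S"
    unfolding S_def using amg_in_preimage_image_other[OF A B] False by simp
  have "openin (subtopology X B) {x \<in> topspace (subtopology X B). j B x \<in> G}"
    by (rule openin_continuous_map_preimage[OF continuous_map_j[OF B] G])
  then have "openin X {x \<in> topspace (subtopology X B). j B x \<in> G}"
    by (rule openin_member_subset[OF B])
  then have "openin X (A \<inter> {x \<in> topspace (subtopology X B). j B x \<in> G})"
    by (rule openin_Int[OF openin_member[OF A]])
  moreover have "A \<inter> {x \<in> topspace (subtopology X B). j B x \<in> G} = S"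
    unfolding S_def using topspace_subtopology_member[OF B] by auto
  ultimately have "openin (subtopology X A) S" using SA by (simp add: openin_subset_topspace_eq
        openin_open_subtopology[OF openin_member[OF A]])
  then have "openin (subtopology (E A) (j A ` A)) (j A ` S)" by (rule openin_image_j[OF A SA])
  then obtain H where H: "openin (E A) H" "j A ` S = H \<inter> j A ` A"
    unfolding openin_subtopology by blast
  have "closedin (E A) (j A ` (A \<inter> B))" using closedin_image_Int[OF A B] False by simp
  moreover have "H \<inter> j A ` A \<subseteq> j A ` (A \<inter> B)" using H(2) unfolding S_def by blast
  ultimately have "H \<subseteq> j A ` (A \<inter> B)"
    by (rule openin_dense_Int_subset_closedin[OF dense_j[OF A] H(1)])
  then have "j A ` S = H" using H(2) by blast
  then show ?thesis using preimage H(1) by simp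
qed

lemma continuous_map_amg_in: "A \<in> \<A> \<Longrightarrow> continuous_map (E A) amg (amg_in j A)"
  unfolding amg_eq
proof (rule continuous_on_generated_topo)
  fix S assume A: "A \<in> \<A>" and "S \<in> amg_subbasis"
  then show "openin (E A) (amg_in j A -` S \<inter> topspace (E A))"
    using openin_amg_in_preimage_image[OF A] amg_in_preimage_V[OF A] openin_Wext by auto
next
  assume "A \<in> \<A>"
  then have "amg_in j A ` topspace (E A) \<in> amg_subbasis" by blast
  then show "amg_in j A ` topspace (E A) \<subseteq> \<Union>amg_subbasis" by (rule Union_upper)
qed

lemma closure_of_Inl: "amg closure_of (Inl ` topspace X) = topspace amg"
proof (rule equalityI[OF closure_of_subset_topspace subsetI])
  fix p assume "p \<in> topspace amg"
  then show "p \<in> amg closure_of (Inl ` topspace X)"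
  proof (cases rule: amg_points_cases)
    case (1 x)
    then show ?thesis using closure_of_subset[of "Inl ` topspace X" amg] Inl_in_topspace_amg by blast
  next
    case (2 A y)
    have "p = amg_in j A y" using 2(3,4) amg_in_outside[of y j A] by simp
    then have "p \<in> amg_in j A ` (E A closure_of (j A ` A))" using 2(2) dense_j[OF 2(1)] by blast
    also have "\<dots> \<subseteq> amg closure_of (amg_in j A ` j A ` A)"
      by (rule continuous_map_image_closure_subset[OF continuous_map_amg_in[OF 2(1)]])
    also have "amg_in j A ` j A ` A \<subseteq> Inl ` topspace X"
      using amg_in_j[OF 2(1)] member_subset_topspace[OF 2(1)] by auto
    then have "amg closure_of (amg_in j A ` j A ` A) \<subseteq> amg closure_of (Inl ` topspace X)"
      by (rule closure_of_mono)
    finally show ?thesis .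
  qed
qed

lemma separate_amg_in:
  assumes A: "A \<in> \<A>" and y: "y \<in> topspace (E A)" "y' \<in> topspace (E A)" "y \<noteq> y'"
  obtains N N' where "openin amg N" "openin amg N'" "amg_in j A y \<in> N" "amg_in j A y' \<in> N'"
    "disjnt N N'"
proof -
  obtain G G' where G: "openin (E A) G" "openin (E A) G'" "y \<in> G" "y' \<in> G'" "disjnt G G'"
    using Hausdorff_member[OF A] y unfolding Hausdorff_space_def by blast
  have "disjnt (amg_in j A ` G) (amg_in j A ` G')"
    using G(5) inj_amg_in[of j A] unfolding disjnt_def by (simp add: image_Int[symmetric])
  then show ?thesis using that openin_amg_image[OF A G(1)] openin_amg_image[OF A G(2)] G(3,4) by blast
qed

lemma separate_Inl_Inl:
  assumes HX: "Hausdorff_space X" and x: "x \<in> topspace X" "x' \<in> topspace X" "x \<noteq> x'"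
  obtains N N' where "openin amg N" "openin amg N'" "Inl x \<in> N" "Inl x' \<in> N'" "disjnt N N'"
proof -
  obtain U U' where U: "openin X U" "openin X U'" "x \<in> U" "x' \<in> U'" "disjnt U U'"
    using HX x unfolding Hausdorff_space_def by blast
  have "q \<notin> V U'" if q: "q \<in> V U" for q
  proof (cases q)
    case (Inl z)
    then show ?thesis using q Inl_in_V_iff[OF U(1)] Inl_in_V_iff[OF U(2)] U(5)
      unfolding disjnt_def by blast
  next
    case (Inr r)
    obtain B w where r: "r = (B, w)" by fastforce
    then have B: "B \<in> \<A>" "w \<in> W B U" using q Inr Inr_in_V by auto
    have "j B ` (U \<inter> B) \<inter> j B ` (U' \<inter> B) = {}"
      using inj_on_j[OF B(1)] U(5) unfolding disjnt_def by (auto dest: inj_onD)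
    then have "W B U \<inter> W B U' = {}" by (rule Wext_disjoint[OF dense_j[OF B(1)]])
    then show ?thesis using B Inr r Inr_in_V[of B w U'] by blast
  qed
  then have "disjnt (V U) (V U')" unfolding disjnt_def by blast
  then show ?thesis
    using that openin_amg_V[OF U(1)] openin_amg_V[OF U(2)] Inl_in_V_iff[OF U(1)] Inl_in_V_iff[OF U(2)] U(3,4)
    by blast
qed

lemma separate_Inl_Inr:
  assumes closed: "\<And>A. A \<in> \<A> \<Longrightarrow> closedin X A"
    and x: "x \<in> topspace X" and A: "A \<in> \<A>" and y: "y \<in> topspace (E A)" "y \<notin> j A ` A"
  obtains N N' where "openin amg N" "openin amg N'" "Inl x \<in> N" "Inr (A, y) \<in> N'" "disjnt N N'"
proof (cases "x \<in> A")
  case True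
  have "j A x \<in> topspace (E A)" using image_j_subset_topspace[OF A] True by blast
  moreover have "j A x \<noteq> y" using y(2) True by blast
  ultimately show ?thesis
    using separate_amg_in[OF A _ y(1)] that amg_in_j[OF A True] amg_in_outside[of y j A, OF y(2)]
    by metis
next
  case False
  define U where "U = topspace X - A"
  have U: "openin X U" unfolding U_def using closed[OF A] by (simp add: openin_diff)
  have "U \<inter> A = {}" unfolding U_def by blast
  then have "W A U = {}" using Wext_disjoint[OF dense_j[OF A], of "{}" "{}"] by simp
  then have "amg_in j A -` V U \<inter> topspace (E A) = {}" using amg_in_preimage_V[OF A U] by simp
  then have "disjnt (V U) (amg_in j A ` topspace (E A))" unfolding disjnt_def by blast
  moreover have "Inr (A, y) \<in> amg_in j A ` topspace (E A)"
    using y amg_in_outside[of y j A] by (metis imageI)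
  moreover have "Inl x \<in> V U" using x False Inl_in_V_iff[OF U] unfolding U_def by simp
  ultimately show ?thesis
    using that openin_amg_V[OF U] openin_amg_image[OF A openin_topspace] by blast
qed

lemma separate_Inr_Inr:
  assumes A: "A \<in> \<A>" "y \<in> topspace (E A)" "y \<notin> j A ` A"
    and A': "A' \<in> \<A>" "y' \<in> topspace (E A')" "y' \<notin> j A' ` A'"
    and ne: "(A, y) \<noteq> (A', y')"
  obtains N N' where "openin amg N" "openin amg N'" "Inr (A, y) \<in> N" "Inr (A', y') \<in> N'"
    "disjnt N N'"
proof (cases "A = A'")
  case True
  then show ?thesis
    using separate_amg_in[OF A(1,2), of y'] A'(2) ne that
      amg_in_outside[of y j A, OF A(3)] amg_in_outside[of y' j A', OF A'(3)] by auto
next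
  case False
  define G where "G = topspace (E A) - j A ` (A \<inter> A')"
  define G' where "G' = topspace (E A') - j A' ` (A' \<inter> A)"
  have G: "openin (E A) G" unfolding G_def using closedin_image_Int[OF A(1) A'(1) False] by blast
  have G': "openin (E A') G'" unfolding G'_def using closedin_image_Int[OF A'(1) A(1)] False by auto
  have "amg_in j A v \<noteq> amg_in j A' v'" if "v \<in> G" "v' \<in> G'" for v v'
  proof (cases rule: amg_in_cases[of A v j])
    case (1 a)
    then show ?thesis using that amg_in_eq_Inl[of j A' v' a] unfolding G_def by auto
  next
    case 2
    then show ?thesis using amg_in_eq_Inr[of j A' v' A v] False by auto
  qed
  then have "disjnt (amg_in j A ` G) (amg_in j A' ` G')" unfolding disjnt_def by blast
  moreover have "y \<in> G" "y' \<in> G'" using A A' unfolding G_def G'_def by blast+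
  then have "Inr (A, y) \<in> amg_in j A ` G" "Inr (A', y') \<in> amg_in j A' ` G'"
    using amg_in_outside[of y j A, OF A(3)] amg_in_outside[of y' j A', OF A'(3)] by (metis imageI)+
  ultimately show ?thesis using that openin_amg_image[OF A(1) G] openin_amg_image[OF A'(1) G'] by blast
qed

lemma Hausdorff_space_amg:
  assumes HX: "Hausdorff_space X" and closed: "\<And>A. A \<in> \<A> \<Longrightarrow> closedin X A"
  shows "Hausdorff_space amg"
proof -
  have separated: "\<exists>N N'. openin amg N \<and> openin amg N' \<and> p \<in> N \<and> q \<in> N' \<and> disjnt N N'"
    if "p \<in> topspace amg" "q \<in> topspace amg" "p \<noteq> q" for p q
  proof -
    have swap: "\<exists>N N'. openin amg N \<and> openin amg N' \<and> p \<in> N \<and> q \<in> N' \<and> disjnt N N'"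
      if "openin amg N" "openin amg N'" "q \<in> N" "p \<in> N'" "disjnt N N'" for N N'
      using that disjnt_sym by blast
    from that(1) show ?thesis
    proof (cases rule: amg_points_cases)
      case (1 x)
      from that(2) show ?thesis
      proof (cases rule: amg_points_cases)
        case (1 x')
        then show ?thesis using separate_Inl_Inl[OF HX \<open>x \<in> topspace X\<close>, of x'] \<open>p = Inl x\<close> that(3)
          by (metis (no_types, lifting))
      next
        case (2 A y)
        then show ?thesis using separate_Inl_Inr[OF closed \<open>x \<in> topspace X\<close>] \<open>p = Inl x\<close>
          by (metis (no_types, lifting))
      qed
    next
      case (2 A y)
      from that(2) show ?thesis
      proof (cases rule: amg_points_cases)
        case (1 x')
        then show ?thesis using separate_Inl_Inr[OF closed _ 2(1-3)] \<open>p = Inr (A, y)\<close> swap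
          by (metis (no_types, lifting))
      next
        case (2 A' y')
        then show ?thesis using separate_Inr_Inr[OF \<open>A \<in> \<A>\<close> \<open>y \<in> topspace (E A)\<close> \<open>y \<notin> j A ` A\<close>]
            \<open>p = Inr (A, y)\<close> that(3) by (metis (no_types, lifting))
      qed
    qed
  qed
  then show ?thesis unfolding Hausdorff_space_def by blast
qed

text \<open>The finitely many closed sets A \<inter> A' (A' \<in> \<F>) cover the part of A outside U; enlarging
  an open set with trace U \<inter> A by their complement keeps the trace, so every point of E(A)
  outside A lies in W A U.\<close>
lemma remainder_subset_W:
  assumes A: "A \<in> \<A>" and U: "openin X U"
    and \<F>: "finite \<F>" "\<F> \<subseteq> \<A>" "A \<notin> \<F>" and cover: "A \<subseteq> U \<union> \<Union>\<F>"
  shows "topspace (E A) - j A ` A \<subseteq> W A U"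
proof -
  define L where "L = (\<Union>A'\<in>\<F>. j A ` (A \<inter> A'))"
  have L: "closedin (E A) L"
    unfolding L_def using \<F> closedin_image_Int[OF A] by (intro closedin_Union) auto
  obtain G where G: "openin (E A) G" "G \<inter> j A ` A = j A ` (U \<inter> A)"
    using exists_openin_trace[OF A U] .
  have "(G \<union> (topspace (E A) - L)) \<inter> j A ` A = j A ` (U \<inter> A)"
  proof (intro equalityI subsetI)
    fix z assume z: "z \<in> (G \<union> (topspace (E A) - L)) \<inter> j A ` A"
    then obtain a where a: "a \<in> A" "z = j A a" by blast
    show "z \<in> j A ` (U \<inter> A)"
    proof (cases "z \<in> G")
      case True
      then show ?thesis using G(2) z by blast
    next
      case False
      then have "z \<notin> L" using z by blast
      then have "a \<notin> \<Union>\<F>" using a unfolding L_def by blast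
      then show ?thesis using cover a by blast
    qed
  qed (use G(2) in blast)
  then have "G \<union> (topspace (E A) - L) \<subseteq> W A U"
    by (rule Wext_maximal[OF openin_Un[OF G(1) openin_diff[OF openin_topspace L]]])
  moreover have "L \<subseteq> j A ` A" unfolding L_def by blast
  ultimately show ?thesis by blast
qed

lemma topspace_amg_subset_finite_cover:
  assumes \<F>: "finite \<F>" "\<F> \<subseteq> \<A>"
    and \<V>: "\<forall>U\<in>\<V>. openin X U" "topspace X - \<Union>\<A> \<subseteq> \<Union>\<V>"
    and cover: "\<forall>A\<in>\<A> - \<F>. \<exists>U\<in>\<V>. A \<subseteq> U \<union> \<Union>\<F>"
  shows "topspace amg \<subseteq> (\<Union>U\<in>\<V>. V U) \<union> (\<Union>A\<in>\<F>. amg_in j A ` topspace (E A))"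
proof
  fix p assume "p \<in> topspace amg"
  then show "p \<in> (\<Union>U\<in>\<V>. V U) \<union> (\<Union>A\<in>\<F>. amg_in j A ` topspace (E A))"
  proof (cases rule: amg_points_cases)
    case (1 x)
    have "(\<exists>A\<in>\<F>. x \<in> A) \<or> (\<exists>U\<in>\<V>. x \<in> U)"
      using subset_Union_finite_reduction[OF \<V>(2) cover] 1(1) by blast
    then show ?thesis
    proof
      assume "\<exists>A\<in>\<F>. x \<in> A"
      then obtain A where A: "A \<in> \<F>" "A \<in> \<A>" "x \<in> A" using \<F>(2) by blast
      have "p = amg_in j A (j A x)" using amg_in_j[OF A(2,3)] 1(2) by simp
      moreover have "j A x \<in> topspace (E A)" using image_j_subset_topspace[OF A(2)] A(3) by blast
      ultimately have "p \<in> amg_in j A ` topspace (E A)" by blast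
      then show ?thesis using A(1) by (intro UnI2 UN_I)
    next
      assume "\<exists>U\<in>\<V>. x \<in> U"
      then obtain U where "U \<in> \<V>" "x \<in> U" by blast
      then have "p \<in> V U" using Inl_in_V_iff[of U x] \<V>(1) 1(2) by blast
      then show ?thesis using \<open>U \<in> \<V>\<close> by (intro UnI1 UN_I)
    qed
  next
    case (2 A y)
    have p: "p = amg_in j A y" using 2(3,4) amg_in_outside[of y j A] by simp
    show ?thesis
    proof (cases "A \<in> \<F>")
      case True
      have "p \<in> amg_in j A ` topspace (E A)" using p 2(2) by blast
      then show ?thesis using True by (intro UnI2 UN_I)
    next
      case False
      then obtain U where U: "U \<in> \<V>" "A \<subseteq> U \<union> \<Union>\<F>" using cover 2(1) by blast
      have "topspace (E A) - j A ` A \<subseteq> W A U"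
        using remainder_subset_W[OF 2(1) _ \<F> False U(2)] \<V>(1) U(1) by blast
      then have "y \<in> W A U" using 2(2,3) by blast
      then have "p \<in> V U" using p amg_in_image_W_subset_V[OF 2(1), of U] by blast
      then show ?thesis using U(1) by (intro UnI1 UN_I)
    qed
  qed
qed

lemma remainder_subset_V_refinement:
  assumes "\<forall>N\<in>\<U>. openin amg N" "topspace amg \<subseteq> \<Union>\<U>"
  shows "topspace X - \<Union>\<A> \<subseteq> \<Union>{U. openin X U \<and> (\<exists>N\<in>\<U>. V U \<subseteq> N)}"
proof
  fix x assume x: "x \<in> topspace X - \<Union>\<A>"
  then have "Inl x \<in> topspace amg" by (simp add: Inl_in_topspace_amg)
  then obtain N where N: "N \<in> \<U>" "Inl x \<in> N" using assms(2) by blast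
  have "openin amg N" "x \<notin> \<Union>\<A>" using assms(1) N(1) x by auto
  then obtain U where "openin X U" "x \<in> U" "V U \<subseteq> N" using amg_nbhd_Inl N(2) by metis
  then show "x \<in> \<Union>{U. openin X U \<and> (\<exists>N\<in>\<U>. V U \<subseteq> N)}" using N(1) by blast
qed

lemma compact_space_amg:
  assumes compact: "\<And>A. A \<in> \<A> \<Longrightarrow> compact_space (E A)"
    and K: "compactin X (topspace X - \<Union>\<A>)"
    and A4: "\<forall>\<U>. (\<forall>U\<in>\<U>. openin X U) \<and> topspace X - \<Union>\<A> \<subseteq> \<Union>\<U> \<longrightarrow>
        (\<exists>\<A>'. finite \<A>' \<and> \<A>' \<subseteq> \<A> \<and> (\<forall>A\<in>\<A> - \<A>'. \<exists>U\<in>\<U>. A \<subseteq> U \<union> \<Union>\<A>'))"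
  shows "compact_space amg"
  unfolding compact_space_alt
proof (intro allI impI)
  fix \<U> assume \<U>: "(\<forall>N\<in>\<U>. openin amg N) \<and> topspace amg \<subseteq> \<Union>\<U>"
  define \<V> where "\<V> = {U. openin X U \<and> (\<exists>N\<in>\<U>. V U \<subseteq> N)}"
  have \<V>_open: "\<forall>U\<in>\<V>. openin X U" by (simp add: \<V>_def)
  have K_cover: "topspace X - \<Union>\<A> \<subseteq> \<Union>\<V>"
    unfolding \<V>_def by (rule remainder_subset_V_refinement[OF conjunct1[OF \<U>] conjunct2[OF \<U>]])
  obtain \<V>0 where \<V>0: "finite \<V>0" "\<V>0 \<subseteq> \<V>" "topspace X - \<Union>\<A> \<subseteq> \<Union>\<V>0"
    using K[unfolded compactin_def, THEN conjunct2, rule_format, OF conjI[OF \<V>_open K_cover]] by blast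
  have \<V>0_open: "\<forall>U\<in>\<V>0. openin X U" using \<V>0(2) \<V>_open by blast
  from A4[rule_format, OF conjI[OF \<V>0_open \<V>0(3)]] obtain \<F>
    where "finite \<F> \<and> \<F> \<subseteq> \<A> \<and> (\<forall>A\<in>\<A> - \<F>. \<exists>U\<in>\<V>0. A \<subseteq> U \<union> \<Union>\<F>)" ..
  then have \<F>: "finite \<F>" "\<F> \<subseteq> \<A>" "\<forall>A\<in>\<A> - \<F>. \<exists>U\<in>\<V>0. A \<subseteq> U \<union> \<Union>\<F>"
    by simp_all
  have "\<forall>U\<in>\<V>0. \<exists>N. N \<in> \<U> \<and> V U \<subseteq> N" using \<V>0(2) unfolding \<V>_def by blast
  from bchoice[OF this] obtain N where N: "\<forall>U\<in>\<V>0. N U \<in> \<U> \<and> V U \<subseteq> N U" ..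
  define C where "C = (\<Union>A\<in>\<F>. amg_in j A ` topspace (E A))"
  have "compactin amg C"
    unfolding C_def
  proof (rule compactin_Union)
    show "finite ((\<lambda>A. amg_in j A ` topspace (E A)) ` \<F>)" using \<F>(1) by simp
    fix S assume "S \<in> (\<lambda>A. amg_in j A ` topspace (E A)) ` \<F>"
    then obtain A where A: "A \<in> \<A>" "S = amg_in j A ` topspace (E A)" using \<F>(2) by blast
    show "compactin amg S" unfolding A(2)
      using compact[OF A(1)] by (intro image_compactin[OF _ continuous_map_amg_in[OF A(1)]])
        (simp add: compact_space_def)
  qed
  moreover have "C \<subseteq> \<Union>\<U>" using compactin_subset_topspace[OF calculation] \<U> by blast
  ultimately obtain \<G> where \<G>: "finite \<G>" "\<G> \<subseteq> \<U>" "C \<subseteq> \<Union>\<G>"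
    using \<U> unfolding compactin_def by blast
  have "topspace amg \<subseteq> (\<Union>U\<in>\<V>0. V U) \<union> C"
    unfolding C_def by (rule topspace_amg_subset_finite_cover[OF \<F>(1,2) \<V>0_open \<V>0(3) \<F>(3)])
  also have "\<dots> \<subseteq> \<Union>(N ` \<V>0 \<union> \<G>)" using N \<G>(3) by blast
  finally show "\<exists>\<F>. finite \<F> \<and> \<F> \<subseteq> \<U> \<and> topspace amg \<subseteq> \<Union>\<F>"
    using \<V>0(1) \<G>(1,2) N by (intro exI[of _ "N ` \<V>0 \<union> \<G>"]) blast
qed

end

section \<open>Compactifications\<close>

lemma good_family_subset_topspace: "good_family X \<A> \<Longrightarrow> A \<in> \<A> \<Longrightarrow> A \<subseteq> topspace X"
  by (simp add: good_family_def)

lemma good_family_openin: "good_family X \<A> \<Longrightarrow> A \<in> \<A> \<Longrightarrow> openin X A"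
  by (simp add: good_family_def)

lemma good_family_closedin: "good_family X \<A> \<Longrightarrow> A \<in> \<A> \<Longrightarrow> closedin X A"
  by (simp add: good_family_def)

lemma good_family_compactin_Int:
  "good_family X \<A> \<Longrightarrow> A \<in> \<A> \<Longrightarrow> A' \<in> \<A> \<Longrightarrow> A \<noteq> A' \<Longrightarrow> compactin X (A \<inter> A')"
  by (simp add: good_family_def)

lemma good_family_compactin_remainder: "good_family X \<A> \<Longrightarrow> compactin X (topspace X - \<Union>\<A>)"
  by (simp add: good_family_def)

lemma good_family_finite_reduction:
  "good_family X \<A> \<Longrightarrow>
    \<forall>\<U>. (\<forall>U\<in>\<U>. openin X U) \<and> topspace X - \<Union>\<A> \<subseteq> \<Union>\<U> \<longrightarrow>
      (\<exists>\<A>'. finite \<A>' \<and> \<A>' \<subseteq> \<A> \<and> (\<forall>A\<in>\<A> - \<A>'. \<exists>U\<in>\<U>. A \<subseteq> U \<union> \<Union>\<A>'))"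
  by (simp add: good_family_def)

lemma amalgamation_if_good_family:
  assumes "good_family X \<A>" "amalg_data X \<A> E j"
  shows "amalgamation X \<A> E j"
  using assms good_family_openin unfolding amalgamation_def by blast

lemma Hausdorff_amalgamation_of_compactifications:
  assumes gf: "good_family X \<A>"
    and c: "\<forall>A\<in>\<A>. is_compactification (subtopology X A) (C A) (c A)"
  shows "Hausdorff_amalgamation X \<A> C c"
proof -
  have "amalg_data X \<A> C c"
    using c good_family_subset_topspace[OF gf] unfolding amalg_data_def is_compactification_def
    by (simp add: Int_absorb1)
  then have "amalgamation X \<A> C c" by (rule amalgamation_if_good_family[OF gf])
  moreover have "Hausdorff_amalgamation_axioms X \<A> C"
    using c good_family_compactin_Int[OF gf]
    unfolding Hausdorff_amalgamation_axioms_def is_compactification_def by blast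
  ultimately show ?thesis by (simp add: Hausdorff_amalgamation_def)
qed

lemma is_compactification_Amg:
  assumes HX: "Hausdorff_space X" and gf: "good_family X \<A>"
    and c: "\<forall>A\<in>\<A>. is_compactification (subtopology X A) (C A) (c A)"
  shows "is_compactification X (Amg X \<A> C c) Inl"
proof -
  interpret Hausdorff_amalgamation X \<A> C c
    by (rule Hausdorff_amalgamation_of_compactifications[OF gf c])
  have "compact_space (Amg X \<A> C c)"
    using c unfolding is_compactification_def
    by (intro compact_space_amg good_family_compactin_remainder[OF gf] good_family_finite_reduction[OF gf])
      blast
  moreover have "Hausdorff_space (Amg X \<A> C c)"
    by (rule Hausdorff_space_amg[OF HX good_family_closedin[OF gf]])
  ultimately show ?thesis
    unfolding is_compactification_def using embedding_map_Inl closure_of_Inl by blast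
qed

lemma compactification_le_Amg:
  assumes HX: "Hausdorff_space X" and gf: "good_family X \<A>"
    and c: "\<forall>A\<in>\<A>. is_compactification (subtopology X A) (C A) (c A)"
    and d: "\<forall>A\<in>\<A>. is_compactification (subtopology X A) (D A) (d A)"
    and le: "\<forall>A\<in>\<A>. compactification_le (subtopology X A) (C A) (c A) (D A) (d A)"
  shows "compactification_le X (Amg X \<A> C c) Inl (Amg X \<A> D d) Inl"
proof -
  interpret C: Hausdorff_amalgamation X \<A> C c
    by (rule Hausdorff_amalgamation_of_compactifications[OF gf c])
  interpret D: Hausdorff_amalgamation X \<A> D d
    by (rule Hausdorff_amalgamation_of_compactifications[OF gf d])
  have "\<forall>A\<in>\<A>. \<exists>g. continuous_map (D A) (C A) g \<and> (\<forall>a\<in>A. g (d A a) = c A a)"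
    using le C.topspace_subtopology_member unfolding compactification_le_def by simp
  from bchoice[OF this] obtain g
    where g: "\<forall>A\<in>\<A>. continuous_map (D A) (C A) (g A) \<and> (\<forall>a\<in>A. g A (d A a) = c A a)" ..
  have "regular_space (Amg X \<A> C c)"
    using is_compactification_Amg[OF HX gf c] unfolding is_compactification_def
    by (intro compact_Hausdorff_imp_regular_space) auto
  then have "continuous_map (Amg X \<A> D d) (Amg X \<A> C c)
      (case_sum Inl (case_prod (\<lambda>A y. amg_in c A (g A y))))"
    using C.continuous_map_Inl g C.amg_in_j
    by (intro D.continuous_map_amg_case_sum continuous_map_compose[OF _ C.continuous_map_amg_in,
          unfolded o_def]) auto
  then show ?thesis unfolding compactification_le_def
    by (intro exI[of _ "case_sum Inl (case_prod (\<lambda>A y. amg_in c A (g A y)))"]) simp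
qed

lemma amalg_data_closures:
  assumes gf: "good_family X \<A>" and emb: "embedding_map X K k"
  shows "amalg_data X \<A> (\<lambda>A. subtopology K (K closure_of (k ` A))) (\<lambda>A. k)"
  unfolding amalg_data_def
proof (intro ballI conjI)
  have kX: "k ` topspace X \<subseteq> topspace K"
    by (rule continuous_map_image_subset_topspace[OF embedding_map_imp_continuous_map[OF emb]])
  fix A assume A: "A \<in> \<A>"
  have kA: "k ` A \<subseteq> topspace K" using good_family_subset_topspace[OF gf A] kX by blast
  have "homeomorphic_map (subtopology X A)
      (subtopology (subtopology K (k ` topspace X)) (k ` (topspace X \<inter> A))) k"
    by (rule homeomorphic_map_subtopologies[OF emb[unfolded embedding_map_def]]) (use kX in auto)
  moreover have "subtopology (subtopology K (k ` topspace X)) (k ` (topspace X \<inter> A))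
      = subtopology K (k ` (topspace X \<inter> A))"
    by (simp add: subtopology_subtopology Int_absorb1 image_mono)
  ultimately have "embedding_map (subtopology X A) K k"
    unfolding embedding_map_def by simp
  moreover have "k ` topspace (subtopology X A) \<subseteq> K closure_of (k ` A)"
    using closure_of_subset[OF kA] by auto
  ultimately show "embedding_map (subtopology X A) (subtopology K (K closure_of (k ` A))) k"
    by (simp add: embedding_map_in_subtopology)
  show "subtopology K (K closure_of (k ` A)) closure_of (k ` A) = topspace (subtopology K (K closure_of (k ` A)))"
    using closure_of_subset[OF kA] closure_of_subset_topspace[of K "k ` A"]
    by (simp add: closure_of_subtopology Int_absorb1 Int_absorb2)
qed

lemma compactification_le_Amg_closures:
  assumes gf: "good_family X \<A>" and K: "is_compactification X K k"
  shows "compactification_le X K k (Amg X \<A> (\<lambda>A. subtopology K (K closure_of (k ` A))) (\<lambda>A. k)) Inl"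
proof -
  define E where "E = (\<lambda>A. subtopology K (K closure_of (k ` A)))"
  have emb: "embedding_map X K k" using K unfolding is_compactification_def by blast
  then have k: "continuous_map X K k" by (rule embedding_map_imp_continuous_map)
  have "amalg_data X \<A> E (\<lambda>A. k)"
    unfolding E_def by (rule amalg_data_closures[OF gf emb])
  then interpret amalgamation X \<A> E "\<lambda>A. k" by (rule amalgamation_if_good_family[OF gf])
  have "regular_space K"
    using K unfolding is_compactification_def by (intro compact_Hausdorff_imp_regular_space) auto
  then have "continuous_map (Amg X \<A> E (\<lambda>A. k)) K (case_sum k (case_prod (\<lambda>A y. y)))"
    using k by (intro continuous_map_amg_case_sum)
      (auto simp: E_def intro: continuous_map_from_subtopology[OF continuous_map_id, unfolded id_def])
  then show ?thesis unfolding compactification_le_def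
    by (intro exI[of _ "case_sum k (case_prod (\<lambda>A y. y))"]) (simp add: E_def)
qed

lemma is_stone_cech_Amg:
  assumes HX: "Hausdorff_space X" and gf: "good_family X \<A>"
    and b: "\<forall>A\<in>\<A>. is_stone_cech (subtopology X A) (B A) (b A)"
  shows "is_stone_cech X (Amg X \<A> B b) Inl"
proof -
  have c: "\<forall>A\<in>\<A>. is_compactification (subtopology X A) (B A) (b A)"
    using b unfolding is_stone_cech_def by blast
  interpret Hausdorff_amalgamation X \<A> B b
    by (rule Hausdorff_amalgamation_of_compactifications[OF gf c])
  show ?thesis unfolding is_stone_cech_def
  proof (intro conjI allI impI is_compactification_Amg[OF HX gf c])
    fix f :: "'a \<Rightarrow> real"
    assume f: "continuous_map X euclideanreal f \<and> bounded (f ` topspace X)"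
    have "\<forall>A\<in>\<A>. \<exists>g. continuous_map (B A) euclideanreal g \<and> (\<forall>a\<in>A. g (b A a) = f a)"
    proof
      fix A assume A: "A \<in> \<A>"
      have "continuous_map (subtopology X A) euclideanreal f"
        using f by (intro continuous_map_from_subtopology) blast
      moreover have "bounded (f ` topspace (subtopology X A))"
        using f by (rule bounded_subset[OF conjunct2]) auto
      ultimately show "\<exists>g. continuous_map (B A) euclideanreal g \<and> (\<forall>a\<in>A. g (b A a) = f a)"
        using b A topspace_subtopology_member[OF A] unfolding is_stone_cech_def by auto
    qed
    from bchoice[OF this] obtain g
      where g: "\<forall>A\<in>\<A>. continuous_map (B A) euclideanreal (g A) \<and> (\<forall>a\<in>A. g A (b A a) = f a)" ..
    have "continuous_map (Amg X \<A> B b) euclideanreal (case_sum f (case_prod g))"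
      using f g by (intro continuous_map_amg_case_sum[OF regular_space_euclidean]) auto
    then show "\<exists>h. continuous_map (Amg X \<A> B b) euclideanreal h \<and> (\<forall>x\<in>topspace X. h (Inl x) = f x)"
      by (intro exI[of _ "case_sum f (case_prod g)"]) simp
  qed
qed

theorem proposition7p14:
  fixes X :: "'a topology" and \<A> :: "'a set set"
  assumes "Tychonoff_space X" and "good_family X \<A>"
  shows
    "(\<forall>(E :: 'a set \<Rightarrow> 'b topology) j (Z :: 'z topology) f.
        amalg_data X \<A> E j \<and> regular_space Z \<longrightarrow>
        (continuous_map (Amg X \<A> E j) Z f \<longleftrightarrow>
           continuous_map X Z (\<lambda>x. f (Inl x)) \<and>
           (\<forall>A\<in>\<A>. continuous_map (E A) Z (\<lambda>y. f (amg_in j A y))))) \<and>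
    (\<forall>(C :: 'a set \<Rightarrow> 'c topology) c.
        (\<forall>A\<in>\<A>. is_compactification (subtopology X A) (C A) (c A)) \<longrightarrow>
        is_compactification X (Amg X \<A> C c) Inl) \<and>
    (\<forall>(C :: 'a set \<Rightarrow> 'c topology) c (D :: 'a set \<Rightarrow> 'd topology) d.
        (\<forall>A\<in>\<A>. is_compactification (subtopology X A) (C A) (c A)) \<and>
        (\<forall>A\<in>\<A>. is_compactification (subtopology X A) (D A) (d A)) \<and>
        (\<forall>A\<in>\<A>. compactification_le (subtopology X A) (C A) (c A) (D A) (d A)) \<longrightarrow>
        compactification_le X (Amg X \<A> C c) Inl (Amg X \<A> D d) Inl) \<and>
    (\<forall>(K :: 'e topology) k. is_compactification X K k \<longrightarrow>
        compactification_le X K k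
          (Amg X \<A> (\<lambda>A. subtopology K (K closure_of (k ` A))) (\<lambda>A. k)) Inl) \<and>
    (\<forall>(B :: 'a set \<Rightarrow> 'f topology) b.
        (\<forall>A\<in>\<A>. is_stone_cech (subtopology X A) (B A) (b A)) \<longrightarrow>
        is_stone_cech X (Amg X \<A> B b) Inl)"
proof -
  have HX: "Hausdorff_space X" using assms(1) unfolding Tychonoff_space_def by blast
  have continuity: "continuous_map (Amg X \<A> E j) Z f \<longleftrightarrow>
           continuous_map X Z (\<lambda>x. f (Inl x)) \<and> (\<forall>A\<in>\<A>. continuous_map (E A) Z (\<lambda>y. f (amg_in j A y)))"
    if "amalg_data X \<A> E j" "regular_space Z" for E :: "'a set \<Rightarrow> 'b topology" and j and Z :: "'z topology" and f
    using amalgamation.continuous_map_amg_iff[OF amalgamation_if_good_family[OF assms(2) that(1)] that(2)] .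
  show ?thesis
    using is_compactification_Amg[OF HX assms(2)] compactification_le_Amg[OF HX assms(2)]
      compactification_le_Amg_closures[OF assms(2)] is_stone_cech_Amg[OF HX assms(2)]
    by (intro conjI allI impI; (elim conjE)?) (simp_all add: continuity)
qed

end
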